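(* Let $k\ge2$ and $n<0$, and write $q=q_{n,k}$, $r=r_{n,k}$. Every monomial occurring in $\mathcal{F}_{n,k}(x)$ has exponent at least $r$, and the coefficient of $x^r$ in $\mathcal{F}_{n,k}(x)$ equals $(-1)^r\binom{q}{r}$, with $\binom{q}{r}=0$ when $q<r$. In particular, if $q\ge r$ then $\mathcal{F}_{n,k}(x)$ is not identically zero, and its lowest-degree term is $(-1)^r\binom{q}{r}x^r$.
   Context: For $k\ge2$, the polynomials $\mathcal{F}_{n,k}(x)\in\mathbb{Z}[x]$ ($n\in\mathbb{Z}$) are defined by $\mathcal{F}_{1,k}=1$, $\mathcal{F}_{n,k}=0$ for $n=0,-1,\dots,-(k-2)$, and $\mathcal{F}_{n,k}(x)=\sum_{j=1}^{k}x^{k-j}\mathcal{F}_{n-j,k}(x)$ for all $n\in\mathbb{Z}$. This recurrence is used upwards for $n\ge2$, and downwards for $n\le-(k-1)$ as $\mathcal{F}_{n,k}=\mathcal{F}_{n+k,k}-\sum_{j=1}^{k-1}x^j\mathcal{F}_{n+j,k}$. For $n\le0$, set $q_{n,k}=\lfloor(|n|+1)/k\rfloor$ and let $r_{n,k}\in\{0,\dots,k-1\}$ be the residue of $|n|+1$ modulo $k$. Then $|n|+1=kq_{n,k}+r_{n,k}$. *)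

theory Defs
  imports "HOL-Computational_Algebra.Polynomial"
begin

text \<open>Upward part: Fup k m = F_{m-(k-2),k}, i.e. indices n >= -(k-2).
  Base: F_n = 0 for n = -(k-2)..0 (m = 0..k-2), F_1 = 1 (m = k-1);
  for n >= 2 (m >= k): F_n = sum_{j=1..k} x^(k-j) F_{n-j}.\<close>
function Fup :: "nat \<Rightarrow> nat \<Rightarrow> int poly" where
  "Fup k m = (if m < k - 1 then 0
              else if m = k - 1 then 1
              else (\<Sum>j\<in>{1..k}. monom 1 (k - j) * Fup k (m - j)))"
  by auto
termination
  by (relation "measure (\<lambda>(k, m). m)") auto

text \<open>Downward part: Fdown k m = F_{1-m,k}.
  Base: F_1 = 1 (m = 0), F_n = 0 for n = 0..-(k-2) (m = 1..k-1);
  for n <= -(k-1) (m >= k); the k = 0 guard only ensures termination (k >= 2 is always assumed): F_n = F_{n+k} - sum_{j=1..k-1} x^j F_{n+j}.\<close>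
function Fdown :: "nat \<Rightarrow> nat \<Rightarrow> int poly" where
  "Fdown k m = (if m = 0 then 1
                else if m < k \<or> k = 0 then 0
                else Fdown k (m - k) - (\<Sum>j\<in>{1..k-1}. monom 1 j * Fdown k (m - j)))"
  by auto
termination
  by (relation "measure (\<lambda>(k, m). m)") auto

definition F :: "nat \<Rightarrow> int \<Rightarrow> int poly" where
  "F k n = (if n \<ge> - (int k - 2) then Fup k (nat (n + int k - 2))
            else Fdown k (nat (1 - n)))"

definition qnk :: "int \<Rightarrow> nat \<Rightarrow> nat" where
  "qnk n k = (nat \<bar>n\<bar> + 1) div k"

definition rnk :: "int \<Rightarrow> nat \<Rightarrow> nat" where
  "rnk n k = (nat \<bar>n\<bar> + 1) mod k"

end

theory Submission
  imports Defs
begin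

text \<open>For \<open>n < 0\<close> we have \<open>F k n = Fdown k m\<close> with \<open>m = |n| + 1 = q k + r\<close>.
  Modulo \<open>x^k\<close> the downward recurrence says that the coefficient of \<open>x^i\<close> (\<open>i < k\<close>) in
  \<open>Fdown k m\<close> is that in \<open>Fdown k (m - k)\<close> minus the sum over \<open>1 \<le> j \<le> i\<close> of the coefficient
  of \<open>x^(i - j)\<close> in \<open>Fdown k (m - j)\<close>. Passing from \<open>m\<close> to \<open>m - j\<close> with \<open>j \<le> r\<close> keeps \<open>q\<close>
  and lowers \<open>r\<close> by \<open>j\<close>, passing to \<open>m - k\<close> lowers \<open>q\<close> by one, so strong induction on \<open>m\<close>
  reduces the claim to the partial alternating row sum of Pascal's triangle
  \<open>\<Sum>i\<le>r. (-1)^i (q choose i) = (-1)^r (q - 1 choose r)\<close>.\<close>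

declare Fdown.simps [simp del] Fup.simps [simp del]

lemma alternating_sum_choose_Suc:
  "(\<Sum>i\<le>r. (-1) ^ i * int (Suc p choose i)) = (-1) ^ r * int (p choose r)"
proof (induction r)
  case 0
  then show ?case by simp
next
  case (Suc r)
  then have "(\<Sum>i\<le>Suc r. (-1) ^ i * int (Suc p choose i))
      = (-1) ^ r * int (p choose r) + (-1) ^ Suc r * int (Suc p choose Suc r)"
    by simp
  also have "\<dots> = (-1) ^ Suc r * int (p choose Suc r)"
    by (simp add: algebra_simps)
  finally show ?case .
qed

lemma alternating_sum_choose_Suc_below:
  "(\<Sum>j\<in>{1..r}. (-1) ^ (r - j) * int (Suc p choose (r - j)))
     = (-1) ^ r * int (p choose r) - (-1) ^ r * int (Suc p choose r)"
proof -
  have "(\<Sum>j\<in>{1..r}. (-1) ^ (r - j) * int (Suc p choose (r - j)))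
      = (\<Sum>i<r. (-1) ^ i * int (Suc p choose i))"
    by (rule sum.reindex_bij_witness[of _ "\<lambda>i. r - i" "\<lambda>j. r - j"]) auto
  also have "\<dots> = (\<Sum>i\<le>r. (-1) ^ i * int (Suc p choose i)) - (-1) ^ r * int (Suc p choose r)"
    by (simp add: lessThan_Suc_atMost [symmetric])
  finally show ?thesis
    by (simp add: alternating_sum_choose_Suc)
qed

lemma Fdown_less: "m < k \<Longrightarrow> Fdown k m = (if m = 0 then 1 else 0)"
  by (subst Fdown.simps) auto

lemma Fdown_rec:
  assumes "k \<ge> 2" "m \<ge> k"
  shows "Fdown k m = Fdown k (m - k) - (\<Sum>j\<in>{1..k-1}. monom 1 j * Fdown k (m - j))"
  using assms by (subst Fdown.simps) auto

lemma coeff_Fdown_rec: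
  assumes "k \<ge> 2" "m \<ge> k" "i < k"
  shows "coeff (Fdown k m) i = coeff (Fdown k (m - k)) i - (\<Sum>j\<in>{1..i}. coeff (Fdown k (m - j)) (i - j))"
proof -
  have "(\<Sum>j\<in>{1..k-1}. coeff (monom 1 j * Fdown k (m - j)) i)
      = (\<Sum>j\<in>{1..k-1}. if i < j then 0 else coeff (Fdown k (m - j)) (i - j))"
    by (intro sum.cong) (simp_all add: coeff_monom_mult)
  also have "\<dots> = (\<Sum>j\<in>{1..i}. coeff (Fdown k (m - j)) (i - j))"
    by (rule sum.mono_neutral_cong_right) (use assms(3) in auto)
  finally show ?thesis
    using Fdown_rec[OF assms(1,2)] by (simp add: coeff_sum)
qed

lemma Fdown_lowest_coeffs:
  assumes k: "k \<ge> 2"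
  shows "(\<forall>i < m mod k. coeff (Fdown k m) i = 0)
       \<and> coeff (Fdown k m) (m mod k) = (-1) ^ (m mod k) * int (m div k choose (m mod k))"
proof (induction m rule: less_induct)
  case (less m)
  show ?case
  proof (cases "m < k")
    case True
    then show ?thesis by (auto simp: Fdown_less)
  next
    case False
    define q r where "q = m div k" and "r = m mod k"
    have r: "r < k" and m: "m = q * k + r"
      using k by (simp_all add: q_def r_def)
    obtain p where q: "q = Suc p"
      using False m r by (cases q) auto
    have IH_k: "(\<forall>i < r. coeff (Fdown k (m - k)) i = 0)
        \<and> coeff (Fdown k (m - k)) r = (-1) ^ r * int (p choose r)"
    proof -
      have "m - k = p * k + r" using m q by simp
      then have "(m - k) mod k = r" "(m - k) div k = p" using r by auto
      then show ?thesis using less.IH[of "m - k"] k False by simp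
    qed
    have IH_j: "(\<forall>i < r - j. coeff (Fdown k (m - j)) i = 0)
        \<and> coeff (Fdown k (m - j)) (r - j) = (-1) ^ (r - j) * int (q choose (r - j))"
      if "1 \<le> j" "j \<le> r" for j
    proof -
      have "m - j = q * k + (r - j)" using m that by simp
      then have "(m - j) mod k = r - j" "(m - j) div k = q" using r by auto
      then show ?thesis using less.IH[of "m - j"] that False k by simp
    qed
    have low: "coeff (Fdown k m) i = 0" if "i < r" for i
    proof -
      have "(\<Sum>j\<in>{1..i}. coeff (Fdown k (m - j)) (i - j)) = 0"
        using IH_j that by (intro sum.neutral) auto
      then show ?thesis
        using coeff_Fdown_rec[OF k, of m i] False r that IH_k by simp
    qed
    have "(\<Sum>j\<in>{1..r}. coeff (Fdown k (m - j)) (r - j))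
        = (\<Sum>j\<in>{1..r}. (-1) ^ (r - j) * int (q choose (r - j)))"
      using IH_j by (intro sum.cong) auto
    also have "\<dots> = (-1) ^ r * int (p choose r) - (-1) ^ r * int (q choose r)"
      using alternating_sum_choose_Suc_below[of r p] q by simp
    finally have top: "coeff (Fdown k m) r = (-1) ^ r * int (q choose r)"
      using coeff_Fdown_rec[OF k, of m r] False r IH_k by simp
    show ?thesis
      using low top by (simp add: q_def r_def)
  qed
qed

lemma F_eq_Fdown:
  assumes "k \<ge> 2" "n < 0"
  shows "F k n = Fdown k (nat (1 - n))"
proof (cases "n \<ge> - (int k - 2)")
  case True
  then have "Fup k (nat (n + int k - 2)) = 0" "Fdown k (nat (1 - n)) = 0"
    using assms by (simp_all add: Fup.simps[of k] Fdown_less)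
  then show ?thesis using True by (simp add: F_def)
qed (simp add: F_def)

lemma Least_coeff_nonzero:
  assumes "\<forall>i < r. coeff p i = 0" "coeff p r \<noteq> 0"
  shows "(LEAST i. coeff p i \<noteq> 0) = r"
  by (rule Least_equality) (use assms in \<open>auto simp: not_less [symmetric]\<close>)

theorem mainTheorem5:
  fixes k :: nat and n :: int
  assumes "k \<ge> 2" and "n < 0"
  defines "q \<equiv> qnk n k" and "r \<equiv> rnk n k"
  shows "(\<forall>i<r. coeff (F k n) i = 0)
       \<and> coeff (F k n) r = (-1) ^ r * int (q choose r)
       \<and> (q \<ge> r \<longrightarrow> F k n \<noteq> 0 \<and> (LEAST i. coeff (F k n) i \<noteq> 0) = r
              \<and> coeff (F k n) r = (-1) ^ r * int (q choose r))"
proof -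
  have abs_n: "nat \<bar>n\<bar> + 1 = nat (1 - n)" using assms(2) by simp
  have "q = nat (1 - n) div k" "r = nat (1 - n) mod k"
    by (simp_all only: q_def r_def qnk_def rnk_def abs_n)
  then have lowest: "(\<forall>i<r. coeff (F k n) i = 0) \<and> coeff (F k n) r = (-1) ^ r * int (q choose r)"
    using Fdown_lowest_coeffs[OF assms(1)] F_eq_Fdown[OF assms(1,2)] by simp
  moreover have "coeff (F k n) r \<noteq> 0" if "q \<ge> r"
    using lowest that by simp
  ultimately show ?thesis
    using Least_coeff_nonzero[of r "F k n"] by auto
qed

end
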